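(* Let $H$ be a monoid such that $\mathcal{P}_{\mathrm{fin},1}(H)$ is UmF. Then: (i) the group of units $H^\times$ of $H$ has order $\le 2$; (ii) $uy=yu=y$ for all $u\in H^\times$ and $y\in H\setminus H^\times$; (iii) $H\setminus H^\times$ is an almost-breakable semigroup.
   Context: $\mathcal{P}_{\mathrm{fin},1}(H)$ denotes the set of non-empty finite subsets of $H$ containing $1_H$, a monoid under $XY=\{xy:x\in X,y\in Y\}$. In a monoid $M$: $x\mid_M y$ iff $y\in MxM$; $x,y$ are associated if each divides the other; proper divisor means divides but not associated. A unit-divisor divides $1_M$; otherwise it is a non-unit-divisor. An irreducible is a non-unit-divisor $a$ with $a\neq xy$ for all non-unit-divisors $x,y$ properly dividing $a$. A factorization of $x$ is a finite word over the irreducibles with product $x$. For words $\mathfrak a,\mathfrak b$, $\mathfrak a\sqsubseteq\mathfrak b$ means $\mathfrak a$ is, up to associatedness of letters, a subword (subsequence) of some permutation of $\mathfrak b$; equivalence means $\sqsubseteq$ both ways. A factorization $\mathfrak a$ of $x$ is minimal if no factorization $\mathfrak b$ of $x$ satisfies $\mathfrak b\sqsubseteq\mathfrak a\not\sqsubseteq\mathfrak b$. $M$ is UmF if every non-unit-divisor has a factorization and any two minimal factorizations of an element are equivalent. A semigroup $S$ is almost-breakable if for all $x,y\in S$, $xy\in\{x,y\}$ or $yx\in\{x,y\}$. *)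

theory Defs
  imports Main "HOL-Library.Multiset" "HOL-Library.Sublist"
begin

(* A monoid is given abstractly by a carrier M, a multiplication f and an identity e. *)

definition mdvd :: "'b set \<Rightarrow> ('b \<Rightarrow> 'b \<Rightarrow> 'b) \<Rightarrow> 'b \<Rightarrow> 'b \<Rightarrow> bool" where
  "mdvd M f x y \<longleftrightarrow> (\<exists>a\<in>M. \<exists>b\<in>M. y = f (f a x) b)"

definition massoc :: "'b set \<Rightarrow> ('b \<Rightarrow> 'b \<Rightarrow> 'b) \<Rightarrow> 'b \<Rightarrow> 'b \<Rightarrow> bool" where
  "massoc M f x y \<longleftrightarrow> mdvd M f x y \<and> mdvd M f y x"

definition mproper_dvd :: "'b set \<Rightarrow> ('b \<Rightarrow> 'b \<Rightarrow> 'b) \<Rightarrow> 'b \<Rightarrow> 'b \<Rightarrow> bool" where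
  "mproper_dvd M f x y \<longleftrightarrow> mdvd M f x y \<and> \<not> massoc M f x y"

definition unit_divisor :: "'b set \<Rightarrow> ('b \<Rightarrow> 'b \<Rightarrow> 'b) \<Rightarrow> 'b \<Rightarrow> 'b \<Rightarrow> bool" where
  "unit_divisor M f e x \<longleftrightarrow> mdvd M f x e"

definition non_unit_divisor :: "'b set \<Rightarrow> ('b \<Rightarrow> 'b \<Rightarrow> 'b) \<Rightarrow> 'b \<Rightarrow> 'b \<Rightarrow> bool" where
  "non_unit_divisor M f e x \<longleftrightarrow> x \<in> M \<and> \<not> unit_divisor M f e x"

definition mirreducible :: "'b set \<Rightarrow> ('b \<Rightarrow> 'b \<Rightarrow> 'b) \<Rightarrow> 'b \<Rightarrow> 'b \<Rightarrow> bool" where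
  "mirreducible M f e a \<longleftrightarrow> non_unit_divisor M f e a \<and>
     \<not> (\<exists>x y. non_unit_divisor M f e x \<and> non_unit_divisor M f e y \<and>
            mproper_dvd M f x a \<and> mproper_dvd M f y a \<and> a = f x y)"

definition wprod :: "('b \<Rightarrow> 'b \<Rightarrow> 'b) \<Rightarrow> 'b \<Rightarrow> 'b list \<Rightarrow> 'b" where
  "wprod f e w = foldr f w e"

definition factorization :: "'b set \<Rightarrow> ('b \<Rightarrow> 'b \<Rightarrow> 'b) \<Rightarrow> 'b \<Rightarrow> 'b list \<Rightarrow> 'b \<Rightarrow> bool" where
  "factorization M f e w x \<longleftrightarrow> (\<forall>a\<in>set w. mirreducible M f e a) \<and> wprod f e w = x"

definition wsub :: "'b set \<Rightarrow> ('b \<Rightarrow> 'b \<Rightarrow> 'b) \<Rightarrow> 'b list \<Rightarrow> 'b list \<Rightarrow> bool" where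
  "wsub M f a b \<longleftrightarrow> (\<exists>p c. mset p = mset b \<and> subseq c p \<and> list_all2 (massoc M f) a c)"

definition wequiv :: "'b set \<Rightarrow> ('b \<Rightarrow> 'b \<Rightarrow> 'b) \<Rightarrow> 'b list \<Rightarrow> 'b list \<Rightarrow> bool" where
  "wequiv M f a b \<longleftrightarrow> wsub M f a b \<and> wsub M f b a"

definition minimal_factorization :: "'b set \<Rightarrow> ('b \<Rightarrow> 'b \<Rightarrow> 'b) \<Rightarrow> 'b \<Rightarrow> 'b list \<Rightarrow> 'b \<Rightarrow> bool" where
  "minimal_factorization M f e a x \<longleftrightarrow> factorization M f e a x \<and>
     \<not> (\<exists>b. factorization M f e b x \<and> wsub M f b a \<and> \<not> wsub M f a b)"

definition UmF :: "'b set \<Rightarrow> ('b \<Rightarrow> 'b \<Rightarrow> 'b) \<Rightarrow> 'b \<Rightarrow> bool" where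
  "UmF M f e \<longleftrightarrow>
     (\<forall>x. non_unit_divisor M f e x \<longrightarrow> (\<exists>a. factorization M f e a x)) \<and>
     (\<forall>x\<in>M. \<forall>a b. minimal_factorization M f e a x \<and> minimal_factorization M f e b x
                 \<longrightarrow> wequiv M f a b)"

definition Pfin1 :: "'a::monoid_mult set set" where
  "Pfin1 = {X. finite X \<and> X \<noteq> {} \<and> 1 \<in> X}"

definition setmul :: "'a::monoid_mult set \<Rightarrow> 'a set \<Rightarrow> 'a set" where
  "setmul X Y = {x * y | x y. x \<in> X \<and> y \<in> Y}"

definition munits :: "'a::monoid_mult set" where
  "munits = {u. \<exists>v. u * v = 1 \<and> v * u = 1}"

definition almost_breakable :: "'a::monoid_mult set \<Rightarrow> bool" where
  "almost_breakable S \<longleftrightarrow> (\<forall>x\<in>S. \<forall>y\<in>S. x * y \<in> {x, y} \<or> y * x \<in> {x, y})"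

end

(*
  Every member of P_fin,1(H) contains 1, so a divisor is a subset of each of its multiples:
  associated sets are equal, {1} is the only unit-divisor, and every {1, x} with x \<noteq> 1
  is irreducible.  Uniqueness of minimal factorizations therefore forbids
  two factorizations [A, B] and [C, D] of the same set that differ as multisets, as soon as
  the product differs from all four factors.  Each claim follows by exhibiting such a pair:
  if x^2 \<notin> {1, x}, then {1, x}{1, x^2} equals {1, x}{1, x} or {1, x}{1, x}{1, x};
  if u^2 = 1, then {1, u}{1, w} = {1, u}{1, uw}, which forces uw = w for w \<notin> {1, u}
  (so a unit v \<notin> {1, u} would give u = 1);
  and {1, x}{1, y} = {1, x, y}{1, y} for idempotents x, y, where {1, x, y} is irreducible
  unless xy or yx lies in {1, x, y}.
*)
theory Submission imports Defs begin

section \<open>The monoid of finite subsets containing the identity\<close>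

lemma setmul_insert: "setmul (insert a X) Y = (\<lambda>y. a * y) ` Y \<union> setmul X Y"
  unfolding setmul_def by auto

lemma setmul_empty_left [simp]: "setmul {} Y = {}"
  unfolding setmul_def by auto

lemma setmul_one [simp]: "setmul {1} X = X" "setmul X {1} = X"
  unfolding setmul_def by auto

lemma setmul_pair_pair: "setmul {1, a} {1, b} = {1, b, a, a * b}"
  by (simp add: setmul_insert insert_commute)

lemma subset_setmul_left: "1 \<in> Y \<Longrightarrow> X \<subseteq> setmul X Y"
  unfolding setmul_def by force

lemma subset_setmul_right: "1 \<in> X \<Longrightarrow> Y \<subseteq> setmul X Y"
  unfolding setmul_def by force

lemma setmul_Pfin1: "X \<in> Pfin1 \<Longrightarrow> Y \<in> Pfin1 \<Longrightarrow> setmul X Y \<in> Pfin1"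
proof -
  assume X: "X \<in> Pfin1" and Y: "Y \<in> Pfin1"
  have "setmul X Y = (\<lambda>(x, y). x * y) ` (X \<times> Y)"
    unfolding setmul_def by auto
  moreover have "X \<subseteq> setmul X Y"
    using Y unfolding Pfin1_def by (simp add: subset_setmul_left)
  ultimately show ?thesis
    using X Y unfolding Pfin1_def by auto
qed

lemma mdvd_Pfin1_imp_subset: "mdvd Pfin1 setmul X Y \<Longrightarrow> X \<subseteq> Y"
  unfolding mdvd_def Pfin1_def
  using subset_setmul_left subset_setmul_right by (metis mem_Collect_eq order_trans)

lemma one_Pfin1 [simp]: "{1} \<in> Pfin1"
  unfolding Pfin1_def by simp

lemma mdvd_Pfin1_refl: "mdvd Pfin1 setmul X X"
  unfolding mdvd_def by (intro bexI[of _ "{1}"]) auto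

lemma massoc_Pfin1: "massoc Pfin1 setmul = (=)"
  unfolding massoc_def by (intro ext) (auto intro: mdvd_Pfin1_refl dest: mdvd_Pfin1_imp_subset)

lemma non_unit_divisor_Pfin1_iff:
  "non_unit_divisor Pfin1 setmul {1} X \<longleftrightarrow> X \<in> Pfin1 \<and> X \<noteq> {1}"
proof -
  have "X = {1}" if "mdvd Pfin1 setmul X {1}"
  proof -
    have "X \<noteq> {}"
      using that unfolding mdvd_def setmul_def by auto
    with mdvd_Pfin1_imp_subset[OF that] show ?thesis
      by auto
  qed
  then have "mdvd Pfin1 setmul X {1} \<longleftrightarrow> X = {1}"
    using mdvd_Pfin1_refl by blast
  then show ?thesis
    unfolding non_unit_divisor_def unit_divisor_def by blast
qed

lemma mirreducible_Pfin1D: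
  "mirreducible Pfin1 setmul {1} X \<Longrightarrow> X \<in> Pfin1 \<and> X \<noteq> {1}"
  unfolding mirreducible_def non_unit_divisor_Pfin1_iff by blast

lemma mirreducible_Pfin1I:
  assumes "X \<in> Pfin1" "X \<noteq> {1}"
    and "\<And>Y Z. Y \<in> Pfin1 \<Longrightarrow> Z \<in> Pfin1 \<Longrightarrow> Y \<noteq> {1} \<Longrightarrow> Z \<noteq> {1} \<Longrightarrow>
           Y \<subset> X \<Longrightarrow> Z \<subset> X \<Longrightarrow> setmul Y Z \<noteq> X"
  shows "mirreducible Pfin1 setmul {1} X"
  unfolding mirreducible_def non_unit_divisor_Pfin1_iff
proof (intro conjI notI)
  assume "\<exists>Y Z. (Y \<in> Pfin1 \<and> Y \<noteq> {1}) \<and> (Z \<in> Pfin1 \<and> Z \<noteq> {1}) \<and>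
    mproper_dvd Pfin1 setmul Y X \<and> mproper_dvd Pfin1 setmul Z X \<and> X = setmul Y Z"
  then obtain Y Z where "Y \<in> Pfin1" "Z \<in> Pfin1" "Y \<noteq> {1}" "Z \<noteq> {1}"
    "mproper_dvd Pfin1 setmul Y X" "mproper_dvd Pfin1 setmul Z X" "X = setmul Y Z"
    by blast
  moreover have "Y \<subset> X" "Z \<subset> X"
    using calculation(5,6) unfolding mproper_dvd_def massoc_Pfin1
    by (auto dest: mdvd_Pfin1_imp_subset)
  ultimately show False
    using assms(3) by blast
qed (use assms in auto)

lemma mirreducible_pair:
  fixes x :: "'a::monoid_mult"
  assumes "x \<noteq> 1"
  shows "mirreducible Pfin1 setmul {1} {1, x}"
proof (rule mirreducible_Pfin1I)
  fix Y Z :: "'a set"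
  assume "Y \<in> Pfin1" "Y \<noteq> {1}" "Y \<subset> {1, x}"
  then show "setmul Y Z \<noteq> {1, x}"
    unfolding Pfin1_def by auto
qed (use assms in \<open>auto simp: Pfin1_def\<close>)

lemma mirreducible_triple:
  fixes x y :: "'a::monoid_mult"
  assumes "x \<noteq> 1" "y \<noteq> 1" "x \<noteq> y" "x * x = x" "y * y = y"
    and "x * y \<notin> {1, x, y}" "y * x \<notin> {1, x, y}"
  shows "mirreducible Pfin1 setmul {1} {1, x, y}"
proof (rule mirreducible_Pfin1I)
  have pair: "W = {1, x} \<or> W = {1, y}" if "W \<in> Pfin1" "W \<noteq> {1}" "W \<subset> {1, x, y}" for W
  proof -
    have "1 \<in> W"
      using that(1) unfolding Pfin1_def by simp
    show ?thesis
    proof (cases "x \<in> W")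
      case True
      with \<open>1 \<in> W\<close> that(3) have "y \<notin> W"
        by blast
      with True \<open>1 \<in> W\<close> that(3) show ?thesis
        by blast
    next
      case False
      with \<open>1 \<in> W\<close> that(2,3) show ?thesis
        by blast
    qed
  qed
  have products: "setmul {1, x} {1, x} = {1, x}" "setmul {1, y} {1, y} = {1, y}"
      "x * y \<in> setmul {1, x} {1, y}" "y * x \<in> setmul {1, y} {1, x}"
    using assms(4,5) by (simp_all add: setmul_pair_pair insert_commute)
  have "{1, x} \<noteq> {1, x, y}" "{1, y} \<noteq> {1, x, y}"
    using assms(1-3) by auto
  with products assms(6,7)
  have "setmul Y Z \<noteq> {1, x, y}" if "Y = {1, x} \<or> Y = {1, y}" "Z = {1, x} \<or> Z = {1, y}" for Y Z
    using that by (elim disjE) auto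
  then show "setmul Y Z \<noteq> {1, x, y}"
    if "Y \<in> Pfin1" "Z \<in> Pfin1" "Y \<noteq> {1}" "Z \<noteq> {1}" "Y \<subset> {1, x, y}" "Z \<subset> {1, x, y}"
    for Y Z
    using pair[OF that(1,3,5)] pair[OF that(2,4,6)] by blast
qed (use assms(1) in \<open>auto simp: Pfin1_def\<close>)

section \<open>Minimal factorizations in \<open>Pfin1\<close>\<close>

lemma subseq_imp_mset_subset: "subseq xs ys \<Longrightarrow> mset xs \<subseteq># mset ys"
  by (induction rule: list_emb.induct) (auto intro: subset_mset.order_trans)

lemma wsub_Pfin1_iff: "wsub Pfin1 setmul b a \<longleftrightarrow> mset b \<subseteq># mset a"
  unfolding wsub_def massoc_Pfin1 list.rel_eq
proof
  assume "\<exists>p c. mset p = mset a \<and> subseq c p \<and> b = c"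
  then show "mset b \<subseteq># mset a"
    using subseq_imp_mset_subset by metis
next
  assume sub: "mset b \<subseteq># mset a"
  obtain zs where zs: "mset zs = mset a - mset b"
    using ex_mset by blast
  have "mset (zs @ b) = mset a" "subseq b (zs @ b)"
    using sub zs by auto
  then show "\<exists>p c. mset p = mset a \<and> subseq c p \<and> b = c"
    by blast
qed

lemma wprod_Nil [simp]: "wprod f e [] = e"
  and wprod_Cons [simp]: "wprod f e (x # w) = f x (wprod f e w)"
  by (simp_all add: wprod_def)

lemma factorization_Pfin1_in: "factorization Pfin1 setmul {1} a X \<Longrightarrow> X \<in> Pfin1"
proof (induction a arbitrary: X)
  case (Cons A a)
  then show ?case
    unfolding factorization_def by (auto intro: setmul_Pfin1 dest: mirreducible_Pfin1D)
qed (simp add: factorization_def)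

lemma minimal_factorization_Pfin1I:
  assumes "factorization Pfin1 setmul {1} a X"
    and "\<And>b. mset b \<subset># mset a \<Longrightarrow> wprod setmul {1} b \<noteq> X"
  shows "minimal_factorization Pfin1 setmul {1} a X"
  using assms unfolding minimal_factorization_def wsub_Pfin1_iff factorization_def
  by (metis subset_mset.less_le)

lemma UmF_Pfin1_minimal_factorizations_mset_eq:
  fixes X :: "'a::monoid_mult set"
  assumes "UmF (Pfin1 :: 'a::monoid_mult set set) setmul {1}"
    and "minimal_factorization Pfin1 setmul {1} a X" "minimal_factorization Pfin1 setmul {1} b X"
  shows "mset a = mset b"
proof -
  have "X \<in> Pfin1"
    using assms(2) by (auto simp: minimal_factorization_def dest: factorization_Pfin1_in)
  then have "wequiv Pfin1 setmul a b"
    using assms unfolding UmF_def by blast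
  then show ?thesis
    unfolding wequiv_def wsub_Pfin1_iff by (simp add: subset_mset.eq_iff)
qed

lemma minimal_factorization_pair:
  assumes A: "mirreducible Pfin1 setmul {1} A" and B: "mirreducible Pfin1 setmul {1} B"
    and "setmul A B \<noteq> A" "setmul A B \<noteq> B"
  shows "minimal_factorization Pfin1 setmul {1} [A, B] (setmul A B)"
proof (rule minimal_factorization_Pfin1I)
  show "factorization Pfin1 setmul {1} [A, B] (setmul A B)"
    using A B unfolding factorization_def by simp
  have "A \<in> Pfin1" "A \<noteq> {1}" "B \<in> Pfin1"
    using A B mirreducible_Pfin1D by blast+
  moreover from this have "A \<subseteq> setmul A B"
    by (simp add: subset_setmul_left Pfin1_def)
  ultimately have "setmul A B \<noteq> {1}"
    unfolding Pfin1_def by blast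
  fix b
  assume sub: "mset b \<subset># mset [A, B]"
  then have "length b < 2"
    using mset_subset_size by fastforce
  moreover have "set b \<subseteq> {A, B}"
    using set_mset_mono[OF subset_mset.less_imp_le[OF sub]] by simp
  ultimately have "b = [] \<or> (\<exists>C \<in> {A, B}. b = [C])"
    by (cases b) auto
  then have "wprod setmul {1} b \<in> {{1}, A, B}"
    by auto
  with assms(3,4) \<open>setmul A B \<noteq> {1}\<close> show "wprod setmul {1} b \<noteq> setmul A B"
    by blast
qed

lemma UmF_Pfin1_pair_factorization_unique:
  fixes A B C D :: "'a::monoid_mult set"
  assumes "UmF (Pfin1 :: 'a::monoid_mult set set) setmul {1}"
    and "mirreducible Pfin1 setmul {1} A" "mirreducible Pfin1 setmul {1} B"
    and "mirreducible Pfin1 setmul {1} C" "mirreducible Pfin1 setmul {1} D"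
    and "setmul A B = setmul C D" "setmul A B \<notin> {A, B, C, D}"
  shows "mset [A, B] = mset [C, D]"
proof (rule UmF_Pfin1_minimal_factorizations_mset_eq[OF assms(1)])
  show "minimal_factorization Pfin1 setmul {1} [A, B] (setmul A B)"
    using assms(2,3,7) by (intro minimal_factorization_pair) auto
  show "minimal_factorization Pfin1 setmul {1} [C, D] (setmul A B)"
    unfolding assms(6) using assms(4,5,6,7) by (intro minimal_factorization_pair) auto
qed

context
  assumes UmF: "UmF (Pfin1 :: 'a::monoid_mult set set) setmul {1}"
begin

lemma mult_self_eq_one_or_self: "x * x = 1 \<or> x * x = (x :: 'a)"
proof (rule ccontr)
  assume "\<not> ?thesis"
  then have "x * x \<noteq> 1" "x * x \<noteq> x" "x \<noteq> 1"
    by auto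
  define A where "A = {1, x}"
  define A2 where "A2 = {1, x * x}"
  have irr: "mirreducible Pfin1 setmul {1} A" "mirreducible Pfin1 setmul {1} A2"
    unfolding A_def A2_def using \<open>x \<noteq> 1\<close> \<open>x * x \<noteq> 1\<close> by (simp_all add: mirreducible_pair)
  have AA: "setmul A A = {1, x, x * x}"
    unfolding A_def setmul_pair_pair by auto
  have AA2: "setmul A A2 = insert (x * (x * x)) (setmul A A)"
    unfolding AA A_def A2_def setmul_pair_pair by auto
  have "x \<in> setmul A A2" "x * x \<in> setmul A A2"
    unfolding AA2 AA by simp_all
  moreover have "x \<in> A" "x \<notin> A2" "x * x \<notin> A"
    unfolding A_def A2_def using \<open>x * x \<noteq> 1\<close> \<open>x * x \<noteq> x\<close> \<open>x \<noteq> 1\<close> by auto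
  ultimately have AA2_ne: "setmul A A2 \<noteq> A" "setmul A A2 \<noteq> A2" and "A \<noteq> A2"
    by blast+
  show False
  proof (cases "x * (x * x) \<in> setmul A A")
    case True
    then have "setmul A A = setmul A A2"
      unfolding AA2 by auto
    with AA2_ne have "mset [A, A] = mset [A, A2]"
      by (intro UmF_Pfin1_pair_factorization_unique[OF UmF] irr) auto
    with \<open>A \<noteq> A2\<close> show False
      by simp
  next
    case False
    have "minimal_factorization Pfin1 setmul {1} [A, A, A] (setmul A A2)"
    proof (rule minimal_factorization_Pfin1I)
      have "setmul A (setmul A A) = setmul A A2"
        unfolding AA2 AA unfolding A_def by (auto simp: setmul_insert)
      with irr show "factorization Pfin1 setmul {1} [A, A, A] (setmul A A2)"
        unfolding factorization_def by simp
      fix b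
      assume sub: "mset b \<subset># mset [A, A, A]"
      then have "length b < 3"
        using mset_subset_size by fastforce
      moreover have "set b \<subseteq> {A}"
        using set_mset_mono[OF subset_mset.less_imp_le[OF sub]] by simp
      ultimately have "b = [] \<or> b = [A] \<or> b = [A, A]"
        by (cases b; cases "tl b") auto
      moreover have "{1} \<subseteq> setmul A A" "A \<subseteq> setmul A A"
        unfolding AA unfolding A_def by auto
      ultimately have "wprod setmul {1} b \<subseteq> setmul A A"
        by auto
      with False show "wprod setmul {1} b \<noteq> setmul A A2"
        unfolding AA2 by blast
    qed
    moreover have "minimal_factorization Pfin1 setmul {1} [A, A2] (setmul A A2)"
      using irr AA2_ne by (rule minimal_factorization_pair)
    ultimately have "mset [A, A, A] = mset [A, A2]"
      by (rule UmF_Pfin1_minimal_factorizations_mset_eq[OF UmF])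
    then have "size (mset [A, A, A]) = size (mset [A, A2])"
      by (rule arg_cong)
    then show False
      by simp
  qed
qed

lemma unit_mult_self:
  assumes "u \<in> munits"
  shows "u * u = (1 :: 'a)"
proof -
  obtain v where "u * v = 1"
    using assms unfolding munits_def by blast
  from mult_self_eq_one_or_self[of u] show ?thesis
  proof
    assume "u * u = u"
    have "u = u * (u * v)"
      using \<open>u * v = 1\<close> by simp
    also have "\<dots> = u * u * v"
      by (simp only: mult.assoc)
    also have "\<dots> = 1"
      using \<open>u * u = u\<close> \<open>u * v = 1\<close> by simp
    finally show ?thesis
      by simp
  qed
qed

lemma nonunit_mult_self: "x \<notin> munits \<Longrightarrow> x * x = (x :: 'a)"
  using mult_self_eq_one_or_self[of x] unfolding munits_def by blast

lemma involution_absorbs_left: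
  assumes "u * u = 1" "w \<notin> {1, u}"
  shows "u * w = (w :: 'a)"
proof (rule ccontr)
  assume "u * w \<noteq> w"
  then have "u \<noteq> 1"
    by auto
  have uuw: "u * (u * w) = w"
    using assms(1) by (metis mult.assoc mult_1_left)
  then have "u * w \<noteq> 1" "u * w \<noteq> u"
    using assms by auto
  have product: "setmul {1, u} {1, w} = setmul {1, u} {1, u * w}"
    unfolding setmul_pair_pair uuw by auto
  have "w \<in> setmul {1, u} {1, w}" "u \<in> setmul {1, u} {1, w}"
    by (simp_all add: setmul_pair_pair)
  with assms(2) \<open>u \<noteq> 1\<close> \<open>u * w \<noteq> u\<close>
  have "setmul {1, u} {1, w} \<notin> {{1, u}, {1, w}, {1, u}, {1, u * w}}"
    by auto
  with product \<open>u \<noteq> 1\<close> \<open>u * w \<noteq> 1\<close> assms(2)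
  have "mset [{1, u}, {1, w}] = mset [{1, u}, {1, u * w}]"
    by (intro UmF_Pfin1_pair_factorization_unique[OF UmF] mirreducible_pair) auto
  then have "{1, w} = {1, u * w}"
    by simp
  with \<open>u * w \<noteq> w\<close> assms(2) show False
    by (metis doubleton_eq_iff insertI1)
qed

lemma involution_absorbs_right:
  assumes "u * u = 1" "w \<notin> {1, u}"
  shows "w * u = (w :: 'a)"
proof (rule ccontr)
  assume "w * u \<noteq> w"
  then have "u \<noteq> 1"
    by auto
  have wuu: "w * u * u = w"
    using assms(1) by (metis mult.assoc mult_1_right)
  then have "w * u \<noteq> 1" "w * u \<noteq> u"
    using assms by auto
  have product: "setmul {1, w} {1, u} = setmul {1, w * u} {1, u}"
    unfolding setmul_pair_pair wuu by auto
  have "w \<in> setmul {1, w} {1, u}" "u \<in> setmul {1, w} {1, u}"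
    by (simp_all add: setmul_pair_pair)
  with assms(2) \<open>u \<noteq> 1\<close> \<open>w * u \<noteq> u\<close>
  have "setmul {1, w} {1, u} \<notin> {{1, w}, {1, u}, {1, w * u}, {1, u}}"
    by auto
  with product \<open>u \<noteq> 1\<close> \<open>w * u \<noteq> 1\<close> assms(2)
  have "mset [{1, w}, {1, u}] = mset [{1, w * u}, {1, u}]"
    by (intro UmF_Pfin1_pair_factorization_unique[OF UmF] mirreducible_pair) auto
  then have "{1, w} = {1, w * u}"
    by simp
  with \<open>w * u \<noteq> w\<close> assms(2) show False
    by (metis doubleton_eq_iff insertI1)
qed

lemma one_munits: "1 \<in> munits"
  unfolding munits_def by auto

lemma munits_subset_pair: "\<exists>u. munits \<subseteq> {1, u :: 'a}"
proof (cases "munits \<subseteq> {1 :: 'a}")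
  case False
  then obtain u :: 'a where u: "u \<in> munits" "u \<noteq> 1"
    by blast
  have "v \<in> {1, u}" if "v \<in> munits" for v
  proof (rule ccontr)
    assume "v \<notin> {1, u}"
    then have "u * v = v"
      using involution_absorbs_left unit_mult_self[OF u(1)] by blast
    moreover obtain v' where "v * v' = 1"
      using \<open>v \<in> munits\<close> unfolding munits_def by blast
    ultimately have "u = 1"
      by (metis mult.assoc mult_1_right)
    with u(2) show False ..
  qed
  then show ?thesis
    by blast
qed blast

lemma unit_mult_nonunit:
  assumes "u \<in> munits" "y \<notin> munits"
  shows "u * y = (y :: 'a) \<and> y * u = y"
proof -
  have "y \<notin> {1, u}"
    using assms one_munits by auto
  then show ?thesis
    using involution_absorbs_left involution_absorbs_right unit_mult_self[OF assms(1)] by blast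
qed

lemma nonunit_mult_nonunit:
  assumes "x \<notin> munits" "y \<notin> munits"
  shows "x * y \<notin> (munits :: 'a set)"
proof
  assume "x * y \<in> munits"
  then obtain v where v: "x * y * v = 1" "v * (x * y) = 1"
    unfolding munits_def by blast
  then have "v \<in> munits"
    unfolding munits_def by blast
  with assms(2) v(1) have "x * y = 1"
    using unit_mult_nonunit by (metis mult.assoc)
  then have "x = x * (x * y)"
    by simp
  also have "\<dots> = x * y"
    using nonunit_mult_self[OF assms(1)] by (metis mult.assoc)
  finally have "x = 1"
    using \<open>x * y = 1\<close> by simp
  with assms(1) one_munits show False
    by blast
qed

lemma almost_breakable_nonunits: "almost_breakable (- (munits :: 'a set))"
  unfolding almost_breakable_def
proof (intro ballI)
  fix x y :: 'a
  assume "x \<in> - munits" "y \<in> - munits"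
  then have x: "x \<notin> munits" and y: "y \<notin> munits"
    by auto
  show "x * y \<in> {x, y} \<or> y * x \<in> {x, y}"
  proof (rule ccontr)
    assume "\<not> ?thesis"
    then have xy: "x * y \<notin> {x, y}" "y * x \<notin> {x, y}"
      by auto
    have "x \<noteq> 1" "y \<noteq> 1" "x * y \<noteq> 1" "y * x \<noteq> 1"
      using x y nonunit_mult_nonunit[OF x y] nonunit_mult_nonunit[OF y x] one_munits by auto
    have "x * x = x" "y * y = y"
      using nonunit_mult_self x y by blast+
    then have "x \<noteq> y"
      using xy by auto
    let ?P = "setmul {1, x} {1, y}"
    have product: "?P = setmul {1, x, y} {1, y}"
      unfolding setmul_pair_pair using \<open>y * y = y\<close> by (auto simp: setmul_insert)
    have "x \<in> ?P" "y \<in> ?P" "x * y \<in> ?P"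
      by (simp_all add: setmul_pair_pair)
    with xy \<open>x \<noteq> y\<close> \<open>x \<noteq> 1\<close> \<open>y \<noteq> 1\<close> \<open>x * y \<noteq> 1\<close>
    have "?P \<notin> {{1, x}, {1, y}, {1, x, y}, {1, y}}"
      by auto
    moreover have "mirreducible Pfin1 setmul {1} {1, x, y}"
      using \<open>x \<noteq> 1\<close> \<open>y \<noteq> 1\<close> \<open>x \<noteq> y\<close> \<open>x * x = x\<close> \<open>y * y = y\<close>
        \<open>x * y \<noteq> 1\<close> \<open>y * x \<noteq> 1\<close> xy
      by (intro mirreducible_triple) auto
    ultimately have "mset [{1, x}, {1, y}] = mset [{1, x, y}, {1, y}]"
      using product \<open>x \<noteq> 1\<close> \<open>y \<noteq> 1\<close>
      by (intro UmF_Pfin1_pair_factorization_unique[OF UmF] mirreducible_pair) auto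
    then have "{1, x} = {1, x, y}"
      by simp
    with \<open>x \<noteq> y\<close> \<open>y \<noteq> 1\<close> show False
      by (metis insertCI insertE singletonD)
  qed
qed

end

theorem lemma3p5:
  assumes "UmF (Pfin1 :: 'a::monoid_mult set set) setmul {1}"
  shows "(finite (munits :: 'a set) \<and> card (munits :: 'a set) \<le> 2)
    \<and> (\<forall>u\<in>(munits :: 'a set). \<forall>y. y \<notin> munits \<longrightarrow> u * y = y \<and> y * u = y)
    \<and> ((\<forall>x y. x \<notin> (munits :: 'a set) \<and> y \<notin> munits \<longrightarrow> x * y \<notin> munits)
         \<and> almost_breakable (- (munits :: 'a set)))"
proof -
  obtain u :: 'a where sub: "munits \<subseteq> {1, u}"
    using munits_subset_pair[OF assms] by blast
  have "card (munits :: 'a set) \<le> card {1, u}"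
    using sub by (intro card_mono) simp_all
  also have "\<dots> \<le> 2"
    by (simp add: card_insert_if)
  finally have "card (munits :: 'a set) \<le> 2" .
  moreover have "finite (munits :: 'a set)"
    using sub finite_subset by blast
  ultimately show ?thesis
    using unit_mult_nonunit[OF assms] nonunit_mult_nonunit[OF assms] almost_breakable_nonunits[OF assms]
    by blast
qed

end
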